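(* Let $G=(V,E)$ be a finite connected undirected graph with diameter $D$, and let $T\ge 4$ be an integer. Consider any execution of Algorithm FS (described in the context) on $G$ under arbitrary adversarial activations, with rounds numbered so that round $0$ is the first round at whose beginning some node is active. Let $$R = 4D + \Bigl\lfloor \frac{D}{\lfloor T/4\rfloor}\Bigr\rfloor\cdot (T \bmod 4).$$ Then for every round $t\ge R$ all nodes are active and $\delta_t(v)=\delta_t(w)$ for all $v,w\in V$. Moreover, there is a round $t_1$ such that for every $t\ge t_1$, each node $v$ beeps in round $t$ if and only if $\delta_t(v)=0$. In particular $R\le 7D$, so synchronization is reached in $O(D)$ rounds. Each node stores only $\delta(v)$ ($\lceil \log_2 T\rceil$ bits) and $\mathit{State}(v)$, $\mathit{Induced}(v)$ (3 bits in total).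
   Context: Model (beeping model with arbitrary activations). $G=(V,E)$ is a finite connected undirected graph with $n$ nodes and diameter $D$; $N(v)$ is the set of neighbors of $v$. Time proceeds in synchronous rounds. An integer $T\ge 4$ is known to all nodes. In each round, each active node either beeps or listens; a listening node learns only whether at least one of its neighbors beeped in that round (not how many, nor which). Checkpoints: $\mathit{CP}=\{c\in\mathbb{N}_0 : c\equiv 0 \pmod 4 \text{ and } T-c>3\}$, i.e. $\mathit{CP}=\{0,4,\dots,4(\lfloor T/4\rfloor-1)\}$. Algorithm FS. Each node $v$ stores $\delta(v)\in\{0,\dots,T-1\}$, $\mathit{State}(v)\in\{\mathit{Inactive},\mathit{Beep},\mathit{Listen}\}$ and $\mathit{Induced}(v)\in\{\mathit{true},\mathit{false}\}$. Initially all nodes are Inactive (other variables arbitrary). An inactive node does nothing except notice beeps. A node $v$ is \emph{activated in round $t$} if either the adversary chooses to activate it in round $t$, or $v$ is inactive and some neighbor beeps in round $t-1$; in both cases at the beginning of round $t$ it has $\delta(v)=1$, $\mathit{State}(v)=\mathit{Beep}$, $\mathit{Induced}(v)=\mathit{true}$. The adversary may activate any inactive nodes in any rounds. In each round $t$, each active node $v$ acts according to its state at the beginning of the round: (1) If $\mathit{State}(v)=\mathit{Beep}$: $v$ beeps; $\delta(v)\gets\delta(v)+1 \bmod T$; $\mathit{State}(v)\gets\mathit{Listen}$. (2) If $\mathit{State}(v)=\mathit{Listen}$ and at least one neighbor beeps in round $t$: if $\delta(v)\equiv c-1 \pmod T$ for some $c\in\mathit{CP}$, then $\delta(v)\gets\delta(v)+2\bmod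 T$, $\mathit{State}(v)\gets\mathit{Beep}$, $\mathit{Induced}(v)\gets\mathit{true}$ (we say $v$ \emph{gets induced} in round $t$, and each beeping neighbor $w$ \emph{induces} $v$ in round $t$); otherwise $\delta(v)\gets\delta(v)+1\bmod T$. (3) If $\mathit{State}(v)=\mathit{Listen}$ and no neighbor beeps in round $t$: $\delta(v)\gets\delta(v)+1\bmod T$; then, if ($\mathit{Induced}(v)=\mathit{true}$ and the new $\delta(v)\in\mathit{CP}$) or the new $\delta(v)=0$, set $\mathit{State}(v)\gets\mathit{Beep}$ and $\mathit{Induced}(v)\gets\mathit{false}$. Notation: $\delta_t(v)$, $\mathit{State}_t(v)$, $\mathit{Induced}_t(v)$ denote values at the beginning of round $t$. Rounds are numbered so that round $0$ is the first round at whose beginning some node is active. *)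

theory Defs
  imports Main
begin

definition undirected_graph :: "('v \<Rightarrow> 'v \<Rightarrow> bool) \<Rightarrow> bool" where
  "undirected_graph E \<longleftrightarrow> (\<forall>u v. E u v \<longrightarrow> E v u) \<and> (\<forall>v. \<not> E v v)"

definition connected_graph :: "('v \<Rightarrow> 'v \<Rightarrow> bool) \<Rightarrow> bool" where
  "connected_graph E \<longleftrightarrow> (\<forall>u v. E\<^sup>*\<^sup>* u v)"

definition gdist :: "('v \<Rightarrow> 'v \<Rightarrow> bool) \<Rightarrow> 'v \<Rightarrow> 'v \<Rightarrow> nat" where
  "gdist E u v = (LEAST k. (E ^^ k) u v)"

definition diameter :: "('v::finite \<Rightarrow> 'v \<Rightarrow> bool) \<Rightarrow> nat" where
  "diameter E = Max {gdist E u v | u v. True}"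

text \<open>Node states. An inactive node is represented by None; an active node by
  Some (delta, State, Induced).\<close>
datatype bstate = Beep | Listen

type_synonym nstate = "nat \<times> bstate \<times> bool"

definition CP :: "nat \<Rightarrow> nat set" where
  "CP T = {c. c mod 4 = 0 \<and> c + 3 < T}"

definition fs_init :: nstate where
  "fs_init = (1, Beep, True)"

text \<open>One round of Algorithm FS for an active node; h = some neighbour beeped in
  this round. The condition delta = c - 1 (mod T) is written (delta+1) mod T = c
  (c < T since c \<in> CP T).\<close>
fun fs_step :: "nat \<Rightarrow> nstate \<Rightarrow> bool \<Rightarrow> nstate" where
  "fs_step T (d, Beep, ind) h = ((d + 1) mod T, Listen, ind)"
| "fs_step T (d, Listen, ind) h =
     (if h then
        (if (\<exists>c\<in>CP T. (d + 1) mod T = c)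
         then ((d + 2) mod T, Beep, True)
         else ((d + 1) mod T, Listen, ind))
      else
        (let d' = (d + 1) mod T in
         if (ind \<and> d' \<in> CP T) \<or> d' = 0 then (d', Beep, False)
         else (d', Listen, ind)))"

text \<open>cfg t v = state of v at the beginning of round t.\<close>
definition beeps :: "(nat \<Rightarrow> 'v \<Rightarrow> nstate option) \<Rightarrow> nat \<Rightarrow> 'v \<Rightarrow> bool" where
  "beeps cfg t v \<longleftrightarrow> (\<exists>d ind. cfg t v = Some (d, Beep, ind))"

definition hears :: "('v \<Rightarrow> 'v \<Rightarrow> bool) \<Rightarrow> (nat \<Rightarrow> 'v \<Rightarrow> nstate option) \<Rightarrow> nat \<Rightarrow> 'v \<Rightarrow> bool" where
  "hears E cfg t v \<longleftrightarrow> (\<exists>w. E v w \<and> beeps cfg t w)"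

definition delta :: "(nat \<Rightarrow> 'v \<Rightarrow> nstate option) \<Rightarrow> nat \<Rightarrow> 'v \<Rightarrow> nat" where
  "delta cfg t v = fst (the (cfg t v))"

definition fs_execution ::
  "nat \<Rightarrow> ('v \<Rightarrow> 'v \<Rightarrow> bool) \<Rightarrow> (nat \<Rightarrow> 'v \<Rightarrow> nstate option) \<Rightarrow> bool" where
  "fs_execution T E cfg \<longleftrightarrow>
     (\<exists>v. cfg 0 v \<noteq> None) \<and>
     (\<forall>v. cfg 0 v = None \<or> cfg 0 v = Some fs_init) \<and>
     (\<forall>t v. case cfg t v of
         Some x \<Rightarrow> cfg (Suc t) v = Some (fs_step T x (hears E cfg t v))
       | None \<Rightarrow> (cfg (Suc t) v = None \<or> cfg (Suc t) v = Some fs_init) \<and>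
                 (hears E cfg t v \<longrightarrow> cfg (Suc t) v = Some fs_init))"

end

theory Submission
  imports Defs
begin

text \<open>Give every node an unbounded phase counter: the number of rounds since its activation,
  plus one extra for each induction, so that \<open>\<delta> = phase mod T\<close>. No phase exceeds \<open>t + 1\<close>
  in round \<open>t\<close>, and adjacent phases differ by at most one, except by two just after an induction.
  Hence a node of maximal phase \<open>t + 1\<close> keeps it forever, and as soon as it beeps at a
  checkpoint every neighbour is either maximal already or is induced to the maximal phase.
  Starting from a node active in round 0, the maximal phase therefore travels one hop per
  checkpoint gap, i.e. 4 rounds, plus \<open>T mod 4\<close> rounds whenever the gap wraps around \<open>T\<close>;
  it reaches every node by round \<open>R\<close>, after which all \<open>\<delta>\<close> agree. One wrap-around of
  \<open>\<delta>\<close> to 0 later all Induced flags are cleared, and from then on nodes beep exactly at \<open>\<delta> = 0\<close>.\<close>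

section \<open>Checkpoint arithmetic\<close>

lemma mem_CP_iff: "c \<in> CP T \<longleftrightarrow> c mod 4 = 0 \<and> c + 3 < T"
  by (simp add: CP_def)

lemma zero_mem_CP: "4 \<le> T \<Longrightarrow> 0 \<in> CP T"
  by (simp add: CP_def)

lemma CP_neq_Suc_CP: "c \<in> CP T \<Longrightarrow> c' \<in> CP T \<Longrightarrow> c \<noteq> c' + 1"
  unfolding mem_CP_iff by presburger

lemma add_two_mod_not_CP: "r mod T \<in> CP T \<Longrightarrow> (r + 2) mod T \<notin> CP T"
proof -
  assume c: "r mod T \<in> CP T"
  then have "r mod T + 2 < T" "r mod T mod 4 = 0"
    by (simp_all add: mem_CP_iff)
  moreover have "(r + 2) mod T = (r mod T + 2) mod T"
    by (simp only: mod_add_left_eq)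
  moreover have "(a + 2) mod 4 \<noteq> 0" if "a mod 4 = 0" for a :: nat
    using that by presburger
  ultimately show ?thesis
    unfolding mem_CP_iff by simp
qed

lemma Suc_mod_CP_add_two: "(d + 1) mod T \<in> CP T \<Longrightarrow> (d + 2) mod T = (d + 1) mod T + 1"
  using mod_Suc[of "d + 1" T] by (auto simp: mem_CP_iff)

lemma mod_eq_of_Suc_mod_eq:
  fixes a c :: nat
  assumes "(a + 1) mod T = c + 1" "c + 1 < T"
  shows "a mod T = c"
  using assms mod_Suc[of a T] by (auto split: if_splits)

text \<open>The values of \<open>\<delta>\<close> at which a node can beep: a checkpoint (own beep) or a checkpoint
  plus one (beep after being induced).\<close>
definition beep_value :: "nat \<Rightarrow> nat \<Rightarrow> bool" where
  "beep_value T d \<longleftrightarrow> d \<in> CP T \<or> (\<exists>c\<in>CP T. d = c + 1)"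

lemma beep_value_one: "4 \<le> T \<Longrightarrow> beep_value T 1"
  unfolding beep_value_def using zero_mem_CP[of T] by force

lemma beep_value_add_two: "(d + 1) mod T \<in> CP T \<Longrightarrow> beep_value T ((d + 2) mod T)"
  unfolding beep_value_def using Suc_mod_CP_add_two by blast

lemma beep_value_add_not_CP:
  assumes "beep_value T d" "e \<le> 1"
  shows "(d + e + 1) mod T \<notin> CP T"
proof -
  obtain c where "c \<in> CP T" "d = c \<or> d = c + 1"
    using assms(1) unfolding beep_value_def by blast
  then have c: "c mod 4 = 0" "c + 3 < T" "d = c \<or> d = c + 1"
    by (auto simp: mem_CP_iff)
  then have "(d + e + 1) mod T = d + e + 1"
    using assms(2) by auto
  moreover have "(d + e + 1) mod 4 \<noteq> 0"
    using c(1,3) assms(2) by presburger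
  ultimately show ?thesis
    by (simp add: mem_CP_iff)
qed

lemma Suc_mod_CP_not_beep_value: "(d + 1) mod T \<in> CP T \<Longrightarrow> \<not> beep_value T d"
  using beep_value_add_not_CP[of T d 0] by auto

lemma beep_value_Suc_mod_nonzero: "4 \<le> T \<Longrightarrow> beep_value T d \<Longrightarrow> (d + 1) mod T \<noteq> 0"
proof
  assume "4 \<le> T" "beep_value T d" "(d + 1) mod T = 0"
  then show False
    using beep_value_add_not_CP[of T d 0] zero_mem_CP[of T] by simp
qed

text \<open>An upper bound for the round by which the maximal phase has travelled \<open>k\<close> hops:
  each hop costs 4 rounds, and every \<open>T div 4\<close> hops the remaining \<open>T mod 4\<close> rounds of the cycle.\<close>
definition wave_time :: "nat \<Rightarrow> nat \<Rightarrow> nat" where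
  "wave_time T k = (k div (T div 4)) * T + 4 * (k mod (T div 4))"

lemma wave_time_mod_CP:
  assumes "4 \<le> T"
  shows "wave_time T k mod T \<in> CP T"
proof -
  define m where "m = T div 4"
  have "0 < m" "4 * m \<le> T"
    using assms unfolding m_def by auto
  then have lt: "4 * (k mod m) + 3 < T"
    using mod_less_divisor[of m k] by linarith
  then have "wave_time T k mod T = 4 * (k mod m)"
    unfolding wave_time_def m_def[symmetric] by simp
  with lt show ?thesis
    by (simp add: mem_CP_iff)
qed

lemma wave_time_Suc:
  assumes "4 \<le> T"
  shows "wave_time T k + 4 \<le> wave_time T (Suc k)"
proof -
  define m where "m = T div 4"
  have m: "0 < m" "4 * m \<le> T"
    using assms unfolding m_def by auto
  show ?thesis
  proof (cases "Suc k mod m = 0")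
    case True
    then have "Suc k div m = Suc (k div m)" "Suc (k mod m) = m"
      using div_Suc[of k m] mod_Suc[of k m] m by (auto split: if_splits)
    then show ?thesis
      unfolding wave_time_def m_def[symmetric] using True m by simp
  next
    case False
    then have "Suc k div m = k div m" "Suc k mod m = Suc (k mod m)"
      using div_Suc[of k m] mod_Suc[of k m] by (auto split: if_splits)
    then show ?thesis
      unfolding wave_time_def m_def[symmetric] by simp
  qed
qed

lemma wave_time_mono:
  assumes "4 \<le> T" "k \<le> k'"
  shows "wave_time T k \<le> wave_time T k'"
  using assms(2)
proof (induction k' rule: dec_induct)
  case (step n)
  then show ?case
    using wave_time_Suc[OF assms(1), of n] by linarith
qed simp

lemma wave_time_eq: "wave_time T k = 4 * k + (k div (T div 4)) * (T mod 4)"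
proof -
  define m where "m = T div 4"
  have T: "T = 4 * m + T mod 4"
    unfolding m_def by simp
  have "wave_time T k = (k div m) * (4 * m) + (k div m) * (T mod 4) + 4 * (k mod m)"
    unfolding wave_time_def m_def[symmetric] by (subst T) (simp add: algebra_simps)
  also have "\<dots> = 4 * ((k div m) * m + k mod m) + (k div m) * (T mod 4)"
    by algebra
  finally show ?thesis
    unfolding m_def by (simp only: div_mult_mod_eq)
qed

lemma wave_time_le: "wave_time T k \<le> 7 * k"
proof -
  have "(k div (T div 4)) * (T mod 4) \<le> k * 3"
    by (intro mult_le_mono div_le_dividend) simp
  then show ?thesis
    unfolding wave_time_eq by linarith
qed

text \<open>The first round after \<open>r\<close> in which a node of maximal phase, whose \<open>\<delta>\<close> is then
  \<open>(n + 1) mod T\<close>, sits at a checkpoint.\<close>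
definition next_cp :: "nat \<Rightarrow> nat \<Rightarrow> nat" where
  "next_cp T r = (LEAST n. r < n \<and> (n + 1) mod T \<in> CP T)"

lemma next_cp_exists:
  assumes "4 \<le> T"
  shows "\<exists>n. r < n \<and> (n + 1) mod T \<in> CP T"
proof -
  have "(r + 1) * 4 \<le> (r + 1) * T"
    using assms by (rule mult_le_mono2)
  then have "(r + 1) * T - 1 + 1 = (r + 1) * T"
    by simp
  then have "r < (r + 1) * T - 1 \<and> ((r + 1) * T - 1 + 1) mod T \<in> CP T"
    using \<open>(r + 1) * 4 \<le> (r + 1) * T\<close> zero_mem_CP[OF assms] by auto
  then show ?thesis ..
qed

lemma next_cp_gt: "4 \<le> T \<Longrightarrow> r < next_cp T r"
  and next_cp_mem_CP: "4 \<le> T \<Longrightarrow> (next_cp T r + 1) mod T \<in> CP T"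
  unfolding next_cp_def using LeastI_ex[OF next_cp_exists] by blast+

lemma not_CP_before_next_cp: "r < s \<Longrightarrow> s < next_cp T r \<Longrightarrow> (s + 1) mod T \<notin> CP T"
  unfolding next_cp_def using not_less_Least by blast

lemma next_cp_le: "r < s \<Longrightarrow> (s + 1) mod T \<in> CP T \<Longrightarrow> next_cp T r \<le> s"
  unfolding next_cp_def by (rule Least_le) blast

lemma next_cp_gt_Suc:
  assumes "4 \<le> T" "r mod T \<in> CP T"
  shows "Suc r < next_cp T r"
  using next_cp_gt[OF assms(1), of r] next_cp_mem_CP[OF assms(1), of r]
    add_two_mod_not_CP[OF assms(2)] by (cases "next_cp T r = Suc r") auto

lemma next_cp_le_wave_time:
  assumes "4 \<le> T" "r \<le> wave_time T k"
  shows "Suc (next_cp T r) \<le> wave_time T (Suc k)"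
proof -
  have "r < wave_time T (Suc k) - 1" "(wave_time T (Suc k) - 1 + 1) mod T \<in> CP T"
    using assms wave_time_Suc[OF assms(1), of k] wave_time_mod_CP[OF assms(1), of "Suc k"] by auto
  then show ?thesis
    using next_cp_le by fastforce
qed

lemma gdist_walk: "connected_graph E \<Longrightarrow> (E ^^ gdist E u v) u v"
  unfolding connected_graph_def gdist_def by (metis LeastI_ex rtranclp_power)

lemma gdist_le_diameter: "gdist E u v \<le> diameter (E :: 'v::finite \<Rightarrow> 'v \<Rightarrow> bool)"
proof -
  have "{gdist E u v | u v. True} = (\<lambda>(u, v). gdist E u v) ` UNIV"
    by auto
  then show ?thesis
    unfolding diameter_def by (intro Max_ge) auto
qed

section \<open>Phases\<close>

lemma fs_step_induced:
  "(d + 1) mod T \<in> CP T \<Longrightarrow> fs_step T (d, Listen, i) True = ((d + 2) mod T, Beep, True)"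
  by auto

lemma fs_step_not_induced:
  assumes "4 \<le> T" "\<not> (s = Listen \<and> h \<and> (d + 1) mod T \<in> CP T)"
    and "fs_step T (d, s, i) h = (d', s', i')"
  shows "d' = (d + 1) mod T \<and> (s' = Beep \<longrightarrow> beep_value T d')"
  using assms zero_mem_CP[OF assms(1)]
  by (cases s; cases h) (auto simp: beep_value_def Let_def split: if_splits)

definition fs_induced ::
  "nat \<Rightarrow> ('v \<Rightarrow> 'v \<Rightarrow> bool) \<Rightarrow> (nat \<Rightarrow> 'v \<Rightarrow> nstate option) \<Rightarrow> nat \<Rightarrow> 'v \<Rightarrow> bool" where
  "fs_induced T E cfg t v \<longleftrightarrow>
     (\<exists>d i. cfg t v = Some (d, Listen, i) \<and> hears E cfg t v \<and> (d + 1) mod T \<in> CP T)"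

text \<open>The value 1 at inactive nodes is the phase a node has in the round of its activation.\<close>
primrec fs_phase ::
  "nat \<Rightarrow> ('v \<Rightarrow> 'v \<Rightarrow> bool) \<Rightarrow> (nat \<Rightarrow> 'v \<Rightarrow> nstate option) \<Rightarrow> nat \<Rightarrow> 'v \<Rightarrow> nat" where
  "fs_phase T E cfg 0 v = 1"
| "fs_phase T E cfg (Suc t) v =
     (case cfg t v of
        None \<Rightarrow> 1
      | Some x \<Rightarrow> fs_phase T E cfg t v + (if fs_induced T E cfg t v then 2 else 1))"

locale fs_run =
  fixes E :: "'v \<Rightarrow> 'v \<Rightarrow> bool" and T :: nat and cfg :: "nat \<Rightarrow> 'v \<Rightarrow> nstate option"
  assumes undirected: "undirected_graph E"
    and T_ge_4: "4 \<le> T"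
    and execution: "fs_execution T E cfg"
begin

abbreviation phase :: "nat \<Rightarrow> 'v \<Rightarrow> nat" where
  "phase \<equiv> fs_phase T E cfg"

abbreviation induced :: "nat \<Rightarrow> 'v \<Rightarrow> bool" where
  "induced \<equiv> fs_induced T E cfg"

lemma edge_sym: "E u v \<Longrightarrow> E v u"
  using undirected unfolding undirected_graph_def by blast

lemma initial_state: "cfg 0 v = None \<or> cfg 0 v = Some fs_init"
  using execution unfolding fs_execution_def by blast

lemma execution_step:
  "case cfg t v of
     Some x \<Rightarrow> cfg (Suc t) v = Some (fs_step T x (hears E cfg t v))
   | None \<Rightarrow> (cfg (Suc t) v = None \<or> cfg (Suc t) v = Some fs_init) \<and>
             (hears E cfg t v \<longrightarrow> cfg (Suc t) v = Some fs_init)"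
  using execution unfolding fs_execution_def by blast

lemma step_active: "cfg t v = Some x \<Longrightarrow> cfg (Suc t) v = Some (fs_step T x (hears E cfg t v))"
  using execution_step[of t v] by simp

lemma step_inactive:
  "cfg t v = None \<Longrightarrow> cfg (Suc t) v = None \<or> cfg (Suc t) v = Some fs_init"
  "cfg t v = None \<Longrightarrow> hears E cfg t v \<Longrightarrow> cfg (Suc t) v = Some fs_init"
  using execution_step[of t v] by simp_all

lemma activated_state: "cfg (Suc t) v \<noteq> None \<Longrightarrow> cfg t v = None \<Longrightarrow> cfg (Suc t) v = Some fs_init"
  using step_inactive(1)[of t v] by (cases "cfg (Suc t) v") auto

lemma active_Suc: "cfg t v \<noteq> None \<Longrightarrow> cfg (Suc t) v \<noteq> None"
  using step_active by (cases "cfg t v") simp_all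

lemma active_mono:
  assumes "cfg t v \<noteq> None" "t \<le> t'"
  shows "cfg t' v \<noteq> None"
  using assms(2) by (induction t' rule: dec_induct) (simp_all add: assms(1) active_Suc)

lemma active_Suc_if_hears: "hears E cfg t v \<Longrightarrow> cfg (Suc t) v \<noteq> None"
  using step_inactive(2)[of t v] active_Suc[of t v] by (cases "cfg t v") simp_all

lemma hears_if_nbr_init: "cfg t u = Some fs_init \<Longrightarrow> E u v \<Longrightarrow> hears E cfg t v"
  unfolding hears_def beeps_def fs_init_def using edge_sym by blast

text \<open>A node beeps in the round of its activation, so its neighbours are active one round later.\<close>
lemma active_Suc_if_nbr_active: "cfg t u \<noteq> None \<Longrightarrow> E u v \<Longrightarrow> cfg (Suc t) v \<noteq> None"
proof (induction t)
  case 0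
  then have "cfg 0 u = Some fs_init"
    using initial_state[of u] by auto
  then show ?case
    using 0 hears_if_nbr_init active_Suc_if_hears by blast
next
  case (Suc t)
  show ?case
  proof (cases "cfg t u = None")
    case True
    then have "cfg (Suc t) u = Some fs_init"
      using activated_state Suc.prems by blast
    then show ?thesis
      using Suc.prems(2) hears_if_nbr_init active_Suc_if_hears by blast
  qed (use Suc active_Suc in blast)
qed

lemma induced_iff:
  "cfg t v = Some (d, s, i) \<Longrightarrow> induced t v \<longleftrightarrow> s = Listen \<and> hears E cfg t v \<and> (d + 1) mod T \<in> CP T"
  unfolding fs_induced_def by auto

lemma step_induced: "cfg t v = Some (d, s, i) \<Longrightarrow> induced t v \<Longrightarrow> cfg (Suc t) v = Some ((d + 2) mod T, Beep, True)"
  using step_active induced_iff fs_step_induced by simp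

lemma step_not_induced:
  assumes "cfg t v = Some (d, s, i)" "\<not> induced t v" "cfg (Suc t) v = Some (d', s', i')"
  shows "d' = (d + 1) mod T \<and> (s' = Beep \<longrightarrow> beep_value T d')"
  using fs_step_not_induced[OF T_ge_4, of s "hears E cfg t v" d i d' s' i']
    step_active[OF assms(1)] assms induced_iff by auto

definition phase_consistent :: "nat \<Rightarrow> bool" where
  "phase_consistent t \<longleftrightarrow> (\<forall>v d s i. cfg t v = Some (d, s, i) \<longrightarrow>
     d = phase t v mod T \<and> phase t v \<le> Suc t \<and> (s = Beep \<longrightarrow> beep_value T d))"

definition phases_close :: "nat \<Rightarrow> bool" where
  "phases_close t \<longleftrightarrow> (\<forall>u x. E u x \<longrightarrow> cfg t u \<noteq> None \<longrightarrow> cfg t x \<noteq> None \<longrightarrow>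
     phase t u \<le> phase t x + 1 \<or>
     phase t u = phase t x + 2 \<and> (\<exists>c\<in>CP T. \<exists>i. cfg t u = Some (c + 1, Beep, i)))"

lemma phase_consistentD:
  assumes "phase_consistent t" "cfg t v = Some (d, s, i)"
  shows "d = phase t v mod T" "phase t v \<le> Suc t" "s = Beep \<Longrightarrow> beep_value T d"
  using assms unfolding phase_consistent_def by blast+

lemma phases_closeD:
  assumes "phases_close t" "E u x" "cfg t u \<noteq> None" "cfg t x \<noteq> None"
  shows "phase t u \<le> phase t x + 1 \<or>
    phase t u = phase t x + 2 \<and> (\<exists>c\<in>CP T. \<exists>i. cfg t u = Some (c + 1, Beep, i))"
  using assms unfolding phases_close_def by blast

text \<open>If the listener were not behind the beeper, \<open>\<delta>\<close> of the listener plus one would be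
  the beeper's beep value plus one or two, which is never a checkpoint.\<close>
lemma induced_phase_less:
  assumes "phase_consistent t" "phases_close t" "induced t v" "E v w" "beeps cfg t w"
  shows "phase t v < phase t w"
proof (rule ccontr)
  assume "\<not> phase t v < phase t w"
  obtain d i where v: "cfg t v = Some (d, Listen, i)" "(d + 1) mod T \<in> CP T"
    using assms(3) unfolding fs_induced_def by blast
  obtain dw iw where w: "cfg t w = Some (dw, Beep, iw)"
    using assms(5) unfolding beeps_def by blast
  have "phase t v \<le> phase t w + 1"
    using phases_closeD[OF assms(2,4)] v w by auto
  then obtain e where e: "e \<le> 1" "phase t v = phase t w + e"
    using \<open>\<not> phase t v < phase t w\<close> le_Suc_ex[of "phase t w"] by (metis add_le_cancel_left not_less)
  have "(d + 1) mod T = (phase t w + (e + 1)) mod T"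
    using phase_consistentD(1)[OF assms(1) v(1)] e(2) by (simp add: mod_Suc_eq)
  also have "\<dots> = (dw + e + 1) mod T"
    unfolding phase_consistentD(1)[OF assms(1) w] by (simp only: mod_add_left_eq add.assoc)
  finally show False
    using beep_value_add_not_CP[OF phase_consistentD(3)[OF assms(1) w] e(1)] v(2) by simp
qed

lemma induced_phase_le:
  assumes "phase_consistent t" "phases_close t" "induced t v"
  shows "phase t v < Suc t"
proof -
  obtain w where w: "E v w" "beeps cfg t w"
    using assms(3) unfolding fs_induced_def hears_def by blast
  then obtain dw s i where "cfg t w = Some (dw, s, i)"
    unfolding beeps_def by blast
  then show ?thesis
    using induced_phase_less[OF assms w] phase_consistentD(2)[OF assms(1)] by fastforce
qed

lemma induced_if_behind_checkpoint:
  assumes "phase_consistent t" "E x u" "beeps cfg t u" "cfg t x = Some (d, s, i)"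
    and "(phase t x + 1) mod T \<in> CP T"
  shows "induced t x"
proof -
  have CP: "(d + 1) mod T \<in> CP T"
    using phase_consistentD(1)[OF assms(1,4)] assms(5) by (simp add: mod_Suc_eq)
  then have "s = Listen"
    using phase_consistentD(3)[OF assms(1,4)] Suc_mod_CP_not_beep_value by (cases s) auto
  moreover have "hears E cfg t x"
    using assms(2,3) unfolding hears_def by blast
  ultimately show ?thesis
    using CP induced_iff[OF assms(4)] by blast
qed

lemma phase_consistent_Suc:
  assumes "phase_consistent t" "phases_close t"
  shows "phase_consistent (Suc t)"
  unfolding phase_consistent_def
proof (intro allI impI)
  fix v d' s' i'
  assume new: "cfg (Suc t) v = Some (d', s', i')"
  show "d' = phase (Suc t) v mod T \<and> phase (Suc t) v \<le> Suc (Suc t) \<and> (s' = Beep \<longrightarrow> beep_value T d')"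
  proof (cases "cfg t v")
    case None
    then have "cfg (Suc t) v = Some fs_init"
      using activated_state[of t v] new by simp
    then show ?thesis
      using None new beep_value_one[OF T_ge_4] T_ge_4 by (simp add: fs_init_def)
  next
    case (Some y)
    then obtain d s i where old: "cfg t v = Some (d, s, i)"
      by (cases y) auto
    note inv = phase_consistentD[OF assms(1) old]
    show ?thesis
    proof (cases "induced t v")
      case True
      then have "d' = (d + 2) mod T" "s' = Beep" "(d + 1) mod T \<in> CP T"
        using step_induced[OF old] new induced_iff[OF old] by auto
      moreover have "phase (Suc t) v = phase t v + 2"
        using old True by simp
      moreover have "phase t v < Suc t"
        using induced_phase_le[OF assms True] .
      moreover have "d' = (phase t v + 2) mod T"
        using \<open>d' = (d + 2) mod T\<close> inv(1) by (simp only: mod_add_left_eq)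
      ultimately show ?thesis
        using beep_value_add_two by auto
    next
      case False
      then have "d' = (d + 1) mod T \<and> (s' = Beep \<longrightarrow> beep_value T d')"
        using step_not_induced[OF old _ new] by blast
      moreover have "phase (Suc t) v = phase t v + 1"
        using old False by simp
      moreover have "d' = (phase t v + 1) mod T"
        using calculation(1) inv(1) by (simp only: mod_add_left_eq)
      ultimately show ?thesis
        using inv(2) by auto
    qed
  qed
qed

lemma activated_if_nbr_inactive:
  assumes "E u x" "cfg t u \<noteq> None" "cfg t x = None"
  shows "cfg t u = Some fs_init \<and> phase t u = 1"
proof (cases t)
  case 0
  then show ?thesis
    using initial_state[of u] assms(2) by auto
next
  case (Suc s)
  then have "cfg s u = None"
    using active_Suc_if_nbr_active[OF _ assms(1)] assms(3) by blast
  then show ?thesis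
    using activated_state[of s u] Suc assms(2) by simp
qed

lemma phases_close_Suc_active:
  assumes "phase_consistent t" "phases_close t" "E u x"
    and u: "cfg t u = Some (du, su, iu)" and x: "cfg t x = Some (dx, sx, ix)"
  shows "phase (Suc t) u \<le> phase (Suc t) x + 1 \<or>
    phase (Suc t) u = phase (Suc t) x + 2 \<and> (\<exists>c\<in>CP T. \<exists>i. cfg (Suc t) u = Some (c + 1, Beep, i))"
proof -
  have pu: "phase (Suc t) u = phase t u + (if induced t u then 2 else 1)"
    and px: "phase (Suc t) x = phase t x + (if induced t x then 2 else 1)"
    using u x by simp_all
  consider "phase t u \<le> phase t x + 1"
    | c i where "c \<in> CP T" "cfg t u = Some (c + 1, Beep, i)" "phase t u = phase t x + 2"
    using phases_closeD[OF assms(2,3)] u x by blast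
  then show ?thesis
  proof cases
    case 1
    show ?thesis
    proof (cases "induced t u \<and> \<not> induced t x \<and> phase t u = phase t x + 1")
      case True
      then have "(du + 1) mod T \<in> CP T"
        using induced_iff[OF u] by blast
      then have "\<exists>c\<in>CP T. \<exists>i. cfg (Suc t) u = Some (c + 1, Beep, i)"
        using step_induced[OF u] True Suc_mod_CP_add_two by auto
      then show ?thesis
        using pu px True by auto
    qed (use 1 pu px in auto)
  next
    case 2
    text \<open>The node two phases behind the beeper is exactly at a checkpoint, so it gets induced.\<close>
    have "phase t u mod T = c + 1"
      using phase_consistentD(1)[OF assms(1) u] u 2(2) by simp
    then have "(phase t x + 1) mod T = c"
      using 2 mod_eq_of_Suc_mod_eq[of "phase t x + 1" T c] by (simp add: mem_CP_iff)
    moreover have "beeps cfg t u"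
      using 2(2) unfolding beeps_def by blast
    ultimately have "induced t x"
      using induced_if_behind_checkpoint[OF assms(1) edge_sym[OF assms(3)] _ x] 2(1) by simp
    moreover have "\<not> induced t u"
      using induced_iff[OF 2(2)] by simp
    ultimately show ?thesis
      using pu px 2(3) by simp
  qed
qed

lemma phases_close_Suc:
  assumes "phase_consistent t" "phases_close t"
  shows "phases_close (Suc t)"
  unfolding phases_close_def
proof (intro allI impI)
  fix u x
  assume ux: "E u x" "cfg (Suc t) u \<noteq> None" "cfg (Suc t) x \<noteq> None"
  consider "cfg t u = None" | "cfg t u \<noteq> None" "cfg t x = None"
    | du su iu dx sx ix where "cfg t u = Some (du, su, iu)" "cfg t x = Some (dx, sx, ix)"
    by (metis not_None_eq prod_cases3)
  then show "phase (Suc t) u \<le> phase (Suc t) x + 1 \<or>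
    phase (Suc t) u = phase (Suc t) x + 2 \<and> (\<exists>c\<in>CP T. \<exists>i. cfg (Suc t) u = Some (c + 1, Beep, i))"
  proof cases
    case 2
    then have "cfg t u = Some fs_init" "phase t u = 1"
      using activated_if_nbr_inactive[OF ux(1)] by blast+
    moreover have "\<not> induced t u"
      using induced_iff[of t u 1 Beep True] calculation(1) by (simp add: fs_init_def)
    ultimately show ?thesis
      using 2 by simp
  qed (use phases_close_Suc_active[OF assms ux(1)] in simp_all)
qed

lemma phase_consistent_0: "phase_consistent 0"
  unfolding phase_consistent_def
proof (intro allI impI)
  fix v d s i
  assume "cfg 0 v = Some (d, s, i)"
  then have "(d, s, i) = fs_init"
    using initial_state[of v] by auto
  then show "d = phase 0 v mod T \<and> phase 0 v \<le> Suc 0 \<and> (s = Beep \<longrightarrow> beep_value T d)"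
    using beep_value_one[OF T_ge_4] T_ge_4 by (simp add: fs_init_def)
qed

lemma phase_invariants: "phase_consistent t \<and> phases_close t"
proof (induction t)
  case 0
  have "phases_close 0"
    unfolding phases_close_def by simp
  with phase_consistent_0 show ?case ..
qed (use phase_consistent_Suc phases_close_Suc in blast)

lemmas phase_consistent = phase_consistentD[OF phase_invariants[THEN conjunct1]]
lemmas phases_close = phases_closeD[OF phase_invariants[THEN conjunct2]]

section \<open>Propagation of the maximal phase\<close>

lemma max_phase_Suc:
  assumes "cfg t v \<noteq> None" "phase t v = Suc t"
  shows "\<not> induced t v" "cfg (Suc t) v \<noteq> None" "phase (Suc t) v = Suc (Suc t)"
proof -
  show "\<not> induced t v"
    using induced_phase_le[OF phase_invariants[THEN conjunct1] phase_invariants[THEN conjunct2]]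
      assms(2) by fastforce
  then show "phase (Suc t) v = Suc (Suc t)"
    using assms by (cases "cfg t v") auto
  show "cfg (Suc t) v \<noteq> None"
    using active_Suc[OF assms(1)] .
qed

lemma max_phase_persists:
  assumes "cfg r v \<noteq> None" "phase r v = Suc r" "r \<le> t"
  shows "cfg t v \<noteq> None \<and> phase t v = Suc t"
  using assms(3) by (induction t rule: dec_induct) (use assms max_phase_Suc in auto)

text \<open>The state right after \<open>u\<close> was induced to the maximal phase (or \<open>u\<close> is active in round 0).\<close>
definition max_beep :: "nat \<Rightarrow> 'v \<Rightarrow> bool" where
  "max_beep r u \<longleftrightarrow> cfg r u = Some ((r + 1) mod T, Beep, True) \<and> phase r u = Suc r \<and> r mod T \<in> CP T"

lemma max_beep_0: "cfg 0 v \<noteq> None \<Longrightarrow> max_beep 0 v"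
  using initial_state[of v] T_ge_4 zero_mem_CP[OF T_ge_4]
  unfolding max_beep_def fs_init_def by auto

lemma max_beep_if_max_phase: "cfg t v \<noteq> None \<Longrightarrow> phase t v = Suc t \<Longrightarrow> \<exists>r\<le>t. max_beep r v"
proof (induction t)
  case 0
  then show ?case
    using max_beep_0 by auto
next
  case (Suc t)
  show ?case
  proof (cases "cfg t v")
    case None
    then show ?thesis
      using Suc.prems(2) by simp
  next
    case (Some y)
    then obtain d s i where y: "cfg t v = Some (d, s, i)"
      by (cases y) auto
    show ?thesis
    proof (cases "induced t v")
      case True
      then have "phase t v = t"
        using y Suc.prems(2) by simp
      then have "(d + 1) mod T = (t + 1) mod T" "(d + 2) mod T = (t + 2) mod T"
        using phase_consistent(1)[OF y] by (simp_all only: mod_add_left_eq)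
      then have "max_beep (Suc t) v"
        unfolding max_beep_def using step_induced[OF y True] induced_iff[OF y] True Suc.prems(2)
        by simp
      then show ?thesis
        by blast
    next
      case False
      then have "phase t v = Suc t"
        using y Suc.prems(2) by simp
      then show ?thesis
        using Suc.IH y le_SucI by blast
    qed
  qed
qed

text \<open>A node of maximal phase cannot be induced, so a listening one waits for its next checkpoint.\<close>
lemma max_phase_listen_step:
  assumes "cfg s u = Some ((s + 1) mod T, Listen, True)" "phase s u = Suc s"
  shows "cfg (Suc s) u =
    (if (s + 2) mod T \<in> CP T then Some ((s + 2) mod T, Beep, False) else Some ((s + 2) mod T, Listen, True))"
proof -
  have "\<not> induced s u"
    by (rule max_phase_Suc(1)) (simp_all add: assms)
  moreover have "((s + 1) mod T + 1) mod T = (s + 2) mod T"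
    by (simp add: mod_Suc_eq)
  ultimately show ?thesis
    using step_active[OF assms(1)] induced_iff[OF assms(1)] zero_mem_CP[OF T_ge_4]
    by (cases "hears E cfg s u") (auto simp: Let_def)
qed

lemma max_beep_listens:
  assumes "max_beep r u" "Suc r \<le> s" "s < next_cp T r"
  shows "cfg s u = Some ((s + 1) mod T, Listen, True)"
  using assms(2,3)
proof (induction s rule: dec_induct)
  case base
  then show ?case
    using assms(1) step_active[of r u] unfolding max_beep_def by (simp add: mod_Suc_eq)
next
  case (step n)
  have "phase n u = Suc n"
    using max_phase_persists[of r u n] assms(1) step.hyps unfolding max_beep_def by simp
  moreover have "(n + 2) mod T \<notin> CP T"
    using not_CP_before_next_cp[of r "Suc n" T] step by simp
  ultimately show ?case
    using max_phase_listen_step step by simp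
qed

lemma max_beep_beeps:
  assumes "max_beep r u"
  shows "beeps cfg (next_cp T r) u"
proof -
  define s where "s = next_cp T r - 1"
  have r: "r mod T \<in> CP T"
    using assms unfolding max_beep_def by blast
  then have s: "Suc r \<le> s" "s < next_cp T r" "Suc s = next_cp T r"
    using next_cp_gt_Suc[OF T_ge_4 r] unfolding s_def by auto
  then have "phase s u = Suc s"
    using max_phase_persists[of r u s] assms unfolding max_beep_def by simp
  moreover have "(s + 2) mod T \<in> CP T"
    using next_cp_mem_CP[OF T_ge_4, of r] s(3) by simp
  ultimately have "cfg (Suc s) u = Some ((s + 2) mod T, Beep, False)"
    using max_phase_listen_step[OF max_beep_listens[OF assms s(1,2)]] by simp
  then show ?thesis
    unfolding beeps_def s(3) by blast
qed

text \<open>When \<open>u\<close> beeps at its next checkpoint, a neighbour one phase behind is at the same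
  checkpoint and is induced up to the maximal phase.\<close>
lemma max_beep_spreads:
  assumes "max_beep r u" "E u x"
  shows "\<exists>r'\<le>Suc (next_cp T r). max_beep r' x"
proof -
  define n where "n = next_cp T r"
  have r: "cfg r u \<noteq> None" "phase r u = Suc r"
    using assms(1) unfolding max_beep_def by auto
  have n: "r < n" "(n + 1) mod T \<in> CP T"
    using next_cp_gt[OF T_ge_4] next_cp_mem_CP[OF T_ge_4] unfolding n_def by auto
  have beep: "beeps cfg n u"
    using max_beep_beeps[OF assms(1)] unfolding n_def .
  then obtain du iu where du: "cfg n u = Some (du, Beep, iu)"
    unfolding beeps_def by blast
  have pu: "phase n u = Suc n"
    using max_phase_persists[OF r, of n] n by simp
  have x: "cfg n x \<noteq> None"
    using active_mono[OF active_Suc_if_nbr_active[OF r(1) assms(2)], of n] n by simp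
  have "du = (n + 1) mod T"
    using phase_consistent(1)[OF du] pu by simp
  then have "\<not> (\<exists>c\<in>CP T. \<exists>i. cfg n u = Some (c + 1, Beep, i))"
    using du n(2) CP_neq_Suc_CP by auto
  then have "n \<le> phase n x"
    using phases_close[OF assms(2)] du x pu by fastforce
  moreover have "phase n x \<le> Suc n"
    using phase_consistent(2) x by (cases "cfg n x") auto
  ultimately have "phase (Suc n) x = Suc (Suc n)"
  proof (cases "phase n x = Suc n")
    case False
    then have "phase n x = n"
      using \<open>n \<le> phase n x\<close> \<open>phase n x \<le> Suc n\<close> by simp
    moreover obtain dx sx ix where dx: "cfg n x = Some (dx, sx, ix)"
      using x by auto
    ultimately have "induced n x"
      using induced_if_behind_checkpoint[OF phase_invariants[THEN conjunct1]
          edge_sym[OF assms(2)] beep dx] n(2) by simp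
    then show ?thesis
      using dx \<open>phase n x = n\<close> by simp
  qed (use max_phase_Suc x in simp)
  then show ?thesis
    using max_beep_if_max_phase[OF active_Suc[OF x]] unfolding n_def by blast
qed

lemma max_beep_reaches:
  assumes "cfg 0 s0 \<noteq> None" "(E ^^ k) s0 v"
  shows "\<exists>r\<le>wave_time T k. max_beep r v"
  using assms(2)
proof (induction k arbitrary: v)
  case 0
  then show ?case
    using max_beep_0 assms(1) by auto
next
  case (Suc k)
  obtain u where u: "(E ^^ k) s0 u" "E u v"
    using Suc.prems by auto
  obtain r where "r \<le> wave_time T k" "max_beep r u"
    using Suc.IH[OF u(1)] by blast
  then show ?case
    using max_beep_spreads[OF _ u(2)] next_cp_le_wave_time[OF T_ge_4] by (meson le_trans)
qed

lemma max_phase_after_wave_time: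
  assumes "cfg 0 s0 \<noteq> None" "(E ^^ k) s0 v" "k \<le> K" "wave_time T K \<le> t"
  shows "cfg t v \<noteq> None \<and> phase t v = Suc t"
proof -
  obtain r where "r \<le> wave_time T k" "max_beep r v"
    using max_beep_reaches[OF assms(1,2)] by blast
  moreover have "wave_time T k \<le> wave_time T K"
    using wave_time_mono[OF T_ge_4 assms(3)] .
  ultimately show ?thesis
    using max_phase_persists[of r v t] assms(4) unfolding max_beep_def by simp
qed

lemma delta_max_phase:
  assumes "cfg t v \<noteq> None" "phase t v = Suc t"
  shows "delta cfg t v = Suc t mod T"
proof -
  obtain d s i where c: "cfg t v = Some (d, s, i)"
    using assms(1) by auto
  then show ?thesis
    using phase_consistent(1)[OF c] assms(2) unfolding delta_def by simp
qed

section \<open>Stabilisation of the beeps\<close>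

lemma max_phase_wrap:
  assumes "cfg s v \<noteq> None" "phase s v = Suc s" "(s + 2) mod T = 0"
  shows "cfg (Suc s) v = Some (0, Beep, False)"
proof -
  obtain d st i where c: "cfg s v = Some (d, st, i)"
    using assms(1) by auto
  have "(d + 1) mod T = 0"
    using phase_consistent(1)[OF c] assms(2,3) by (simp add: mod_Suc_eq)
  then have CP: "(d + 1) mod T \<in> CP T"
    using zero_mem_CP[OF T_ge_4] by simp
  then have "st = Listen"
    using phase_consistent(3)[OF c] Suc_mod_CP_not_beep_value by (cases st) auto
  moreover have "\<not> induced s v"
    using max_phase_Suc(1)[OF assms(1,2)] .
  ultimately show ?thesis
    using step_active[OF c] induced_iff[OF c] CP \<open>(d + 1) mod T = 0\<close> by (simp add: Let_def)
qed

lemma max_phase_uninduced_step: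
  assumes "phase t v = Suc t" "cfg t v = Some (d, s, False)"
  shows "\<exists>d' s'. cfg (Suc t) v = Some (d', s', False) \<and> (s' = Beep \<longleftrightarrow> d' = 0)"
proof -
  have "\<not> induced t v"
    by (rule max_phase_Suc(1)) (simp_all add: assms)
  moreover have "(d + 1) mod T \<notin> CP T \<Longrightarrow> (d + 1) mod T \<noteq> 0"
    using zero_mem_CP[OF T_ge_4] by metis
  ultimately show ?thesis
    using step_active[OF assms(2)] induced_iff[OF assms(2)] phase_consistent(3)[OF assms(2)]
      beep_value_Suc_mod_nonzero[OF T_ge_4, of d] zero_mem_CP[OF T_ge_4]
    by (cases s; cases "hears E cfg t v") (auto simp: Let_def)
qed

lemma beeps_iff_delta_zero_eventually:
  assumes max: "\<forall>t\<ge>R. \<forall>v. cfg t v \<noteq> None \<and> phase t v = Suc t"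
  shows "\<exists>t1. \<forall>t\<ge>t1. \<forall>v. beeps cfg t v \<longleftrightarrow> delta cfg t v = 0"
proof -
  define s where "s = (R + 2) * T - 2"
  have "(R + 2) * 4 \<le> (R + 2) * T"
    using T_ge_4 by (rule mult_le_mono2)
  then have "s + 2 = (R + 2) * T"
    unfolding s_def by simp
  then have s: "R \<le> s" "(s + 2) mod T = 0"
    using \<open>(R + 2) * 4 \<le> (R + 2) * T\<close> by (auto simp del: mod_mult_self1_is_0 mod_mult_self2_is_0 dest: arg_cong[where f = "\<lambda>n. n mod T"])
  have flags: "\<exists>d st. cfg t v = Some (d, st, False) \<and> (st = Beep \<longleftrightarrow> d = 0)" if "Suc s \<le> t" for t v
    using that
  proof (induction t rule: dec_induct)
    case base
    then show ?case
      using max_phase_wrap max s by simp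
  next
    case (step n)
    then show ?case
      using max_phase_uninduced_step max by (meson Suc_leD le_trans s(1))
  qed
  have "beeps cfg t v \<longleftrightarrow> delta cfg t v = 0" if "Suc s \<le> t" for t v
    using flags[OF that, of v] unfolding beeps_def delta_def by auto
  then show ?thesis
    by blast
qed

end

theorem theorem1:
  fixes E :: "'v::finite \<Rightarrow> 'v \<Rightarrow> bool"
    and T :: nat
    and cfg :: "nat \<Rightarrow> 'v \<Rightarrow> nstate option"
  assumes "undirected_graph E"
    and "connected_graph E"
    and "T \<ge> 4"
    and "fs_execution T E cfg"
  shows "(let D = diameter E;
              R = 4 * D + (D div (T div 4)) * (T mod 4)
          in (\<forall>t\<ge>R. (\<forall>v. cfg t v \<noteq> None) \<and> (\<forall>v w. delta cfg t v = delta cfg t w))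
             \<and> (\<exists>t1. \<forall>t\<ge>t1. \<forall>v. beeps cfg t v \<longleftrightarrow> delta cfg t v = 0)
             \<and> R \<le> 7 * D)"
proof -
  interpret fs_run E T cfg
    using assms by unfold_locales
  obtain s0 where s0: "cfg 0 s0 \<noteq> None"
    using assms(4) unfolding fs_execution_def by blast
  have max: "\<forall>t\<ge>wave_time T (diameter E). \<forall>v. cfg t v \<noteq> None \<and> phase t v = Suc t"
    using max_phase_after_wave_time[OF s0 gdist_walk[OF assms(2)] gdist_le_diameter] by blast
  then have "\<forall>t\<ge>wave_time T (diameter E). (\<forall>v. cfg t v \<noteq> None) \<and> (\<forall>v w. delta cfg t v = delta cfg t w)"
    using delta_max_phase by simp
  then show ?thesis
    using beeps_iff_delta_zero_eventually[OF max] wave_time_le[of T "diameter E"]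
    unfolding wave_time_eq Let_def by blast
qed

end
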